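(* Let $G$ be an $s$ clique-uniform graph of order $n$ with respect to a clique partition $F$ with $|F|=k$, and let $P_G$ be its clique partition graph. (i) If $k<n$, then $\mathcal E(P_G)\le\mathcal E(\mathcal Q_F)+\frac{2ks}{n}-2s$. (ii) If $k>n$, then $\mathcal E(P_G)\ge\mathcal E(\mathcal Q_F)+\frac{2ks}{n}-2s$. (iii) If $k=n$, then $\mathcal E(P_G)=\mathcal E(\mathcal Q_F)$.
   Context: All graphs are finite and simple, $V(G)=\{1,\dots,n\}$. A clique partition of $G$ is a set $F=\{C_1,\dots,C_k\}$ of cliques such that every edge lies in exactly one $C_j$; $G$ is $s$ clique-uniform if $|C_j|=s$ for all $j$. $\mathcal M_F$ is the $n\times k$ $(0,1)$-matrix with $(i,j)$-entry $1$ iff $i\in C_j$, and $\mathcal Q_F=\mathcal M_F\mathcal M_F^T$. The clique-degree $t_i^F$ is the number of cliques of $F$ containing $i$. $\mathcal E(\mathcal Q_F)=\sum_{i=1}^n|\lambda_i(\mathcal Q_F)-\bar t|$ with $\bar t=\frac1n\sum_i t_i^F$. The clique partition graph $P_G$ has vertex set $\{1,\dots,k\}$ with $i\ne j$ adjacent iff $C_i\cap C_j\ne\emptyset$, and $\mathcal E(P_G)$ is the sum of absolute values of its adjacency eigenvalues. *)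

theory Defs
  imports "Jordan_Normal_Form.Char_Poly"
begin

definition simple_graph :: "nat \<Rightarrow> nat set set \<Rightarrow> bool" where
  "simple_graph n E \<longleftrightarrow> (\<forall>e\<in>E. \<exists>u v. e = {u, v} \<and> u \<noteq> v \<and> u < n \<and> v < n)"

definition is_clique :: "nat \<Rightarrow> nat set set \<Rightarrow> nat set \<Rightarrow> bool" where
  "is_clique n E C \<longleftrightarrow> C \<noteq> {} \<and> C \<subseteq> {0..<n} \<and> (\<forall>u\<in>C. \<forall>v\<in>C. u \<noteq> v \<longrightarrow> {u, v} \<in> E)"

definition clique_partition :: "nat \<Rightarrow> nat set set \<Rightarrow> nat set list \<Rightarrow> bool" where
  "clique_partition n E F \<longleftrightarrow> distinct F \<and> (\<forall>C\<in>set F. is_clique n E C) \<and>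
     (\<forall>e\<in>E. \<exists>!j. j < length F \<and> e \<subseteq> F ! j)"

definition clique_uniform :: "nat \<Rightarrow> nat set list \<Rightarrow> bool" where
  "clique_uniform s F \<longleftrightarrow> (\<forall>C\<in>set F. card C = s)"

definition incidence_mat :: "nat \<Rightarrow> nat set list \<Rightarrow> real mat" where
  "incidence_mat n F = mat n (length F) (\<lambda>(i, j). if i \<in> F ! j then 1 else 0)"

definition Q_mat :: "nat \<Rightarrow> nat set list \<Rightarrow> real mat" where
  "Q_mat n F = incidence_mat n F * (incidence_mat n F)\<^sup>T"

definition clique_degree :: "nat set list \<Rightarrow> nat \<Rightarrow> nat" where
  "clique_degree F i = card {j. j < length F \<and> i \<in> F ! j}"

definition avg_clique_degree :: "nat \<Rightarrow> nat set list \<Rightarrow> real" where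
  "avg_clique_degree n F = (\<Sum>i<n. real (clique_degree F i)) / real n"

definition clique_partition_graph_adj :: "nat set list \<Rightarrow> real mat" where
  "clique_partition_graph_adj F = mat (length F) (length F)
     (\<lambda>(i, j). if i \<noteq> j \<and> F ! i \<inter> F ! j \<noteq> {} then 1 else 0)"

definition shifted_energy :: "real mat \<Rightarrow> real \<Rightarrow> real" where
  "shifted_energy A c =
     (let p = char_poly (map_mat complex_of_real A) in
      \<Sum>z\<in>{z. poly p z = 0}. real (order z p) * cmod (z - complex_of_real c))"

definition graph_energy :: "real mat \<Rightarrow> real" where
  "graph_energy A = shifted_energy A 0"

definition Q_energy :: "nat \<Rightarrow> nat set list \<Rightarrow> real" where
  "Q_energy n F = shifted_energy (Q_mat n F) (avg_clique_degree n F)"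

end

theory Submission
  imports Defs "Jordan_Normal_Form.Schur_Decomposition"
begin

(* Let M be the vertex-clique incidence matrix, so that Q_F = M M^T. Two cliques of a clique
   partition share at most one vertex, hence M^T M = s I + A with A the adjacency matrix of P_G.
   Sylvester's identity x^k det (x I - M M^T) = x^n det (x I - M^T M) then says that the spectrum
   of Q_F padded with k zeros is the spectrum of A shifted by s and padded with n zeros. Taking
   traces, the eigenvalues of A sum to 0 and those of Q_F to k s = n t, where t is the average
   clique-degree. Both energies are sums of |lambda - c| over these spectra, and raising the centre
   c by d >= 0 increases such a sum of m terms by at most (m - 2) d as soon as some lambda lies above
   the new centre; a largest eigenvalue does, because it is at least the mean. *)

lemma sum_mset_image_multiplicity:
  "(\<Sum>x\<in>#M. f x) = (\<Sum>x\<in>set_mset M. of_nat (count M x) * f x)"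
proof (induction M)
  case empty
  then show ?case by simp
next
  case (add x M)
  have "(\<Sum>y\<in>set_mset (add_mset x M). of_nat (count (add_mset x M) y) * f y)
      = (\<Sum>y\<in>insert x (set_mset M). of_nat (count M y) * f y + (if y = x then f y else 0))"
    by (intro sum.cong) (auto simp: algebra_simps)
  also have "\<dots> = (\<Sum>y\<in>insert x (set_mset M). of_nat (count M y) * f y) + f x"
    by (simp add: sum.distrib)
  also have "(\<Sum>y\<in>insert x (set_mset M). of_nat (count M y) * f y) = (\<Sum>y\<in>set_mset M. of_nat (count M y) * f y)"
    by (simp add: sum.insert_if not_in_iff)
  finally show ?case using add by (simp add: add.commute)
qed

lemma sum_mset_abs_diff_le:
  fixes X :: "real multiset"
  assumes "x \<in># X" and "v \<le> u" and "u \<le> x"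
  shows "(\<Sum>y\<in>#X. \<bar>y - u\<bar>) \<le> (\<Sum>y\<in>#X. \<bar>y - v\<bar>) + (real (size X) - 2) * (u - v)"
proof -
  obtain Y where X: "X = add_mset x Y" using assms(1) by (metis multi_member_split)
  have "(\<Sum>y\<in>#Y. \<bar>y - u\<bar>) \<le> (\<Sum>y\<in>#Y. \<bar>y - v\<bar> + (u - v))"
    by (rule sum_mset_mono) (use assms(2) in linarith)
  also have "\<dots> = (\<Sum>y\<in>#Y. \<bar>y - v\<bar>) + real (size Y) * (u - v)"
    by (simp add: sum_mset.distrib)
  finally show ?thesis
    using assms(2,3) by (simp add: X algebra_simps)
qed

lemma ex_mem_ge_mean:
  fixes X :: "real multiset"
  assumes "X \<noteq> {#}"
  obtains x where "x \<in># X" and "sum_mset X \<le> real (size X) * x"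
proof
  show "Max_mset X \<in># X" using assms by simp
  have "sum_mset X \<le> (\<Sum>y\<in>#X. Max_mset X)"
    using sum_mset_mono[of X id "\<lambda>_. Max_mset X"] by simp
  then show "sum_mset X \<le> real (size X) * Max_mset X" by simp
qed

definition eigenvalues_mset :: "complex mat \<Rightarrow> complex multiset" where
  "eigenvalues_mset A = proots (char_poly A)"

lemma eigenvalues_mset_linear_factors:
  assumes "char_poly A = (\<Prod>a\<leftarrow>es. [:- a, 1:])"
  shows "eigenvalues_mset A = mset es"
  unfolding eigenvalues_mset_def assms
proof (induction es)
  case (Cons a es)
  have "(\<Prod>a\<leftarrow>es. [:- a, 1:]) \<noteq> (0 :: complex poly)"
    by auto
  then show ?case using Cons by (simp add: proots_mult del: mult_pCons_left)
qed simp

lemma size_eigenvalues_mset: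
  assumes "A \<in> carrier_mat n n"
  shows "size (eigenvalues_mset A) = n"
  using char_poly_factorized[OF assms] by (auto simp: eigenvalues_mset_linear_factors)

lemma shifted_energy_eigenvalues_mset:
  assumes "A \<in> carrier_mat n n"
  shows "shifted_energy A c = (\<Sum>z\<in>#eigenvalues_mset (map_mat complex_of_real A). cmod (z - complex_of_real c))"
proof -
  let ?p = "char_poly (map_mat complex_of_real A)"
  have "?p \<noteq> 0"
    using degree_monic_char_poly[of "map_mat complex_of_real A" n] assms by auto
  then show ?thesis
    unfolding shifted_energy_def Let_def eigenvalues_mset_def sum_mset_image_multiplicity by simp
qed

lemma poly_char_poly:
  fixes A :: "'a::field mat"
  assumes "A \<in> carrier_mat n n"
  shows "poly (char_poly A) z = det (z \<cdot>\<^sub>m 1\<^sub>m n - A)"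
  unfolding char_poly_matrix[OF assms]
  by (rule arg_cong[where f = det], rule eq_matI) (use assms in \<open>auto simp: char_matrix_def\<close>)

definition mat_trace :: "'a::comm_ring_1 mat \<Rightarrow> 'a" where
  "mat_trace A = (\<Sum>i<dim_row A. A $$ (i, i))"

lemma mat_trace_mult_comm:
  fixes A B :: "'a::comm_ring_1 mat"
  assumes "A \<in> carrier_mat n m" and "B \<in> carrier_mat m n"
  shows "mat_trace (A * B) = mat_trace (B * A)"
proof -
  have "mat_trace (A * B) = (\<Sum>i<n. \<Sum>j<m. A $$ (i, j) * B $$ (j, i))"
    using assms unfolding mat_trace_def
    by (auto simp: scalar_prod_def atLeast0LessThan intro!: sum.cong)
  also have "\<dots> = (\<Sum>j<m. \<Sum>i<n. B $$ (j, i) * A $$ (i, j))"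
    by (subst sum.swap) (simp add: mult.commute)
  also have "\<dots> = mat_trace (B * A)"
    using assms unfolding mat_trace_def
    by (auto simp: scalar_prod_def atLeast0LessThan intro!: sum.cong)
  finally show ?thesis .
qed

lemma sum_eigenvalues_mset:
  assumes A: "A \<in> carrier_mat n n"
  shows "sum_mset (eigenvalues_mset A) = mat_trace A"
proof -
  obtain es where es: "char_poly A = (\<Prod>a\<leftarrow>es. [:- a, 1:])"
    using char_poly_factorized[OF A] by blast
  obtain B P Q where "schur_decomposition A es = (B, P, Q)"
    by (cases "schur_decomposition A es") auto
  from schur_decomposition[OF A es this]
  have "similar_mat_wit A B P Q" and diag: "diag_mat B = es" by auto
  then have B: "B \<in> carrier_mat n n" and P: "P \<in> carrier_mat n n" and Q: "Q \<in> carrier_mat n n"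
    and "Q * P = 1\<^sub>m n" and "A = P * (B * Q)"
    using A unfolding similar_mat_wit_def Let_def by auto
  then have "mat_trace A = mat_trace (B * Q * P)"
    by (simp add: mat_trace_mult_comm[OF P, of "B * Q"])
  also have "B * Q * P = B"
    using B P Q \<open>Q * P = 1\<^sub>m n\<close> by simp
  also have "mat_trace B = sum_list es"
    unfolding diag[symmetric] diag_mat_def mat_trace_def
    by (simp add: sum_list_distinct_conv_sum_set atLeast0LessThan)
  finally show ?thesis
    by (simp add: eigenvalues_mset_linear_factors[OF es] sum_mset_sum_list)
qed

lemma mult_mat_vec_conjugate_of_real:
  fixes A :: "real mat" and v :: "complex vec"
  assumes "A \<in> carrier_mat m n" and "v \<in> carrier_vec n"
  shows "map_mat complex_of_real A *\<^sub>v conjugate v = conjugate (map_mat complex_of_real A *\<^sub>v v)"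
  using assms by (intro eq_vecI) (auto simp: scalar_prod_def conjugate_vec_def)

lemma eigenvalues_mset_real_symmetric:
  fixes A :: "real mat"
  assumes A: "A \<in> carrier_mat n n" and sym: "A\<^sup>T = A"
    and z: "z \<in># eigenvalues_mset (map_mat complex_of_real A)"
  shows "Im z = 0"
proof -
  let ?A = "map_mat complex_of_real A"
  have A': "?A \<in> carrier_mat n n" and sym': "?A\<^sup>T = ?A"
    using A sym by (auto simp: map_mat_transpose)
  have "char_poly ?A \<noteq> 0" using degree_monic_char_poly[OF A'] by auto
  then have "eigenvalue ?A z"
    using z by (simp add: eigenvalues_mset_def eigenvalue_root_char_poly[OF A'])
  then obtain v where v: "v \<in> carrier_vec n" "v \<noteq> 0\<^sub>v n" and Av: "?A *\<^sub>v v = z \<cdot>\<^sub>v v"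
    unfolding eigenvalue_def eigenvector_def using A' by auto
  have "z * (v \<bullet>c v) = (?A *\<^sub>v v) \<bullet>c v"
    using v by (simp add: Av)
  also have "\<dots> = v \<bullet> (?A *\<^sub>v conjugate v)"
    using transpose_vec_mult_scalar[OF A', of "conjugate v" v] v sym' by simp
  also have "\<dots> = cnj z * (v \<bullet>c v)"
    using v by (simp add: mult_mat_vec_conjugate_of_real[OF A] Av conjugate_smult_vec)
  finally have "z = cnj z"
    using v by simp
  then show ?thesis
    by (metis Reals_cnj_iff complex_is_Real_iff)
qed

lemma eigenvalues_mset_add_scalar:
  assumes A: "A \<in> carrier_mat n n"
  shows "eigenvalues_mset (c \<cdot>\<^sub>m 1\<^sub>m n + A) = image_mset (\<lambda>a. a + c) (eigenvalues_mset A)"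
proof -
  obtain es where es: "char_poly A = (\<Prod>a\<leftarrow>es. [:- a, 1:])"
    using char_poly_factorized[OF A] by blast
  have cp: "char_poly (c \<cdot>\<^sub>m 1\<^sub>m n + A) = (\<Prod>a\<leftarrow>map (\<lambda>a. a + c) es. [:- a, 1:])"
  proof (rule poly_ext)
    fix z
    have "poly (char_poly (c \<cdot>\<^sub>m 1\<^sub>m n + A)) z = det (z \<cdot>\<^sub>m 1\<^sub>m n - (c \<cdot>\<^sub>m 1\<^sub>m n + A))"
      by (rule poly_char_poly) (use A in simp)
    also have "z \<cdot>\<^sub>m 1\<^sub>m n - (c \<cdot>\<^sub>m 1\<^sub>m n + A) = (z - c) \<cdot>\<^sub>m 1\<^sub>m n - A"
      using A by (intro eq_matI) (auto simp: algebra_simps)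
    also have "det \<dots> = poly (char_poly A) (z - c)"
      by (rule poly_char_poly[OF A, symmetric])
    also have "\<dots> = poly (\<Prod>a\<leftarrow>map (\<lambda>a. a + c) es. [:- a, 1:]) z"
      unfolding es by (induction es) (auto simp: algebra_simps)
    finally show "poly (char_poly (c \<cdot>\<^sub>m 1\<^sub>m n + A)) z = poly (\<Prod>a\<leftarrow>map (\<lambda>a. a + c) es. [:- a, 1:]) z" .
  qed
  show ?thesis
    by (simp add: eigenvalues_mset_linear_factors[OF es] eigenvalues_mset_linear_factors[OF cp])
qed

lemma det_sylvester:
  fixes M N :: "'a::idom mat"
  assumes M: "M \<in> carrier_mat n k" and N: "N \<in> carrier_mat k n"
  shows "z ^ k * det (z \<cdot>\<^sub>m 1\<^sub>m n - M * N) = z ^ n * det (z \<cdot>\<^sub>m 1\<^sub>m k - N * M)"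
proof -
  (* det Z is computed in two ways, through the block triangular products Z * W and L * Z. *)
  define Z where "Z = four_block_mat (1\<^sub>m n) M N (z \<cdot>\<^sub>m 1\<^sub>m k)"
  define W where "W = four_block_mat (z \<cdot>\<^sub>m 1\<^sub>m n) (0\<^sub>m n k) (- N) (1\<^sub>m k)"
  define L where "L = four_block_mat (1\<^sub>m n) (0\<^sub>m n k) (- N) (1\<^sub>m k)"
  have I: "1\<^sub>m n \<in> carrier_mat n n" "1\<^sub>m k \<in> carrier_mat k k" "z \<cdot>\<^sub>m 1\<^sub>m n \<in> carrier_mat n n"
    "z \<cdot>\<^sub>m 1\<^sub>m k \<in> carrier_mat k k" "0\<^sub>m n k \<in> carrier_mat n k" "- N \<in> carrier_mat k n"
    using N by auto
  have Z: "Z \<in> carrier_mat (n + k) (n + k)" and W: "W \<in> carrier_mat (n + k) (n + k)"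
    and L: "L \<in> carrier_mat (n + k) (n + k)"
    unfolding Z_def W_def L_def using M N by auto
  have ZW: "Z * W = four_block_mat (z \<cdot>\<^sub>m 1\<^sub>m n - M * N) M (0\<^sub>m k n) (z \<cdot>\<^sub>m 1\<^sub>m k)"
    unfolding Z_def W_def mult_four_block_mat[OF I(1) M N I(4) I(3) I(5) I(6) I(2)]
    using M N by (intro arg_cong4[where f = four_block_mat])
      (auto simp: scalar_prod_def if_distrib[of "(*) _"] if_distrib[of "\<lambda>x. x * _"] cong: if_cong)
  have LZ: "L * Z = four_block_mat (1\<^sub>m n) M (0\<^sub>m k n) (z \<cdot>\<^sub>m 1\<^sub>m k - N * M)"
    unfolding Z_def L_def mult_four_block_mat[OF I(1) I(5) I(6) I(2) I(1) M N I(4)]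
    using M N by (intro arg_cong4[where f = four_block_mat])
      (auto simp: scalar_prod_def if_distrib[of "(*) _"] if_distrib[of "\<lambda>x. x * _"] cong: if_cong)
  have "det (Z * W) = det (z \<cdot>\<^sub>m 1\<^sub>m n - M * N) * z ^ k"
    unfolding ZW using M N by (subst det_four_block_mat_lower_left_zero[of _ n _ k]) auto
  moreover have "det W = z ^ n"
    unfolding W_def using N by (subst det_four_block_mat_upper_right_zero[of _ n _ k]) auto
  moreover have "det (L * Z) = det (z \<cdot>\<^sub>m 1\<^sub>m k - N * M)"
    unfolding LZ using M N by (subst det_four_block_mat_lower_left_zero[of _ n _ k]) auto
  moreover have "det L = 1"
    unfolding L_def using N by (subst det_four_block_mat_upper_right_zero[of _ n _ k]) auto
  ultimately show ?thesis
    using det_mult[OF Z W] det_mult[OF L Z] by (simp add: mult.commute)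
qed

lemma eigenvalues_mset_mult_comm:
  assumes M: "M \<in> carrier_mat n k" and N: "N \<in> carrier_mat k n"
  shows "replicate_mset k 0 + eigenvalues_mset (M * N) = replicate_mset n 0 + eigenvalues_mset (N * M)"
proof -
  have MN: "M * N \<in> carrier_mat n n" and NM: "N * M \<in> carrier_mat k k" using M N by auto
  have "proots ([:0, 1:] ^ k * char_poly (M * N)) = proots ([:0, 1:] ^ n * char_poly (N * M))"
    by (rule arg_cong, rule poly_ext) (simp add: poly_char_poly[OF MN] poly_char_poly[OF NM] det_sylvester[OF M N])
  moreover have "char_poly (M * N) \<noteq> 0" "char_poly (N * M) \<noteq> 0"
    using degree_monic_char_poly[OF MN] degree_monic_char_poly[OF NM] by auto
  ultimately show ?thesis
    unfolding eigenvalues_mset_def by (simp add: proots_mult proots_power)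
qed

(* Taking real parts loses nothing for symmetric matrices, whose eigenvalues are real. *)
definition real_eigenvalues :: "real mat \<Rightarrow> real multiset" where
  "real_eigenvalues A = image_mset Re (eigenvalues_mset (map_mat complex_of_real A))"

lemma shifted_energy_real_eigenvalues:
  assumes "A \<in> carrier_mat n n" and "A\<^sup>T = A"
  shows "shifted_energy A c = (\<Sum>x\<in>#real_eigenvalues A. \<bar>x - c\<bar>)"
proof -
  have "cmod (z - complex_of_real c) = \<bar>Re z - c\<bar>"
    if "z \<in># eigenvalues_mset (map_mat complex_of_real A)" for z
    using eigenvalues_mset_real_symmetric[OF assms that] by (simp add: cmod_eq_Re)
  then show ?thesis
    unfolding shifted_energy_eigenvalues_mset[OF assms(1)] real_eigenvalues_def
    by (simp add: image_mset.compositionality o_def cong: image_mset_cong)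
qed

lemma size_real_eigenvalues:
  assumes "A \<in> carrier_mat n n"
  shows "size (real_eigenvalues A) = n"
  using assms by (simp add: real_eigenvalues_def size_eigenvalues_mset)

lemma sum_real_eigenvalues:
  assumes "A \<in> carrier_mat n n"
  shows "sum_mset (real_eigenvalues A) = mat_trace A"
proof -
  have "sum_mset (image_mset Re X) = Re (sum_mset X)" for X :: "complex multiset"
    by (induction X) auto
  then show ?thesis
    using sum_eigenvalues_mset[of "map_mat complex_of_real A" n] assms
    by (simp add: real_eigenvalues_def mat_trace_def)
qed

lemma real_eigenvalues_add_scalar:
  assumes "A \<in> carrier_mat n n"
  shows "real_eigenvalues (c \<cdot>\<^sub>m 1\<^sub>m n + A) = image_mset (\<lambda>a. a + c) (real_eigenvalues A)"
proof -
  have "map_mat complex_of_real (c \<cdot>\<^sub>m 1\<^sub>m n + A)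
      = complex_of_real c \<cdot>\<^sub>m 1\<^sub>m n + map_mat complex_of_real A"
    using assms by (intro eq_matI) auto
  then show ?thesis
    using eigenvalues_mset_add_scalar[of "map_mat complex_of_real A" n] assms
    by (simp add: real_eigenvalues_def image_mset.compositionality o_def)
qed

lemma real_eigenvalues_mult_comm:
  assumes "M \<in> carrier_mat n k" and "N \<in> carrier_mat k n"
  shows "replicate_mset k 0 + real_eigenvalues (M * N) = replicate_mset n 0 + real_eigenvalues (N * M)"
proof -
  let ?c = "map_mat complex_of_real"
  have "?c (M * N) = ?c M * ?c N" and "?c (N * M) = ?c N * ?c M"
    using assms by (auto intro: of_real_hom.mat_hom_mult)
  then show ?thesis
    using arg_cong[OF eigenvalues_mset_mult_comm[of "?c M" n k "?c N"], of "image_mset Re"] assms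
    by (simp add: real_eigenvalues_def)
qed

lemma clique_partition_nth:
  assumes "clique_partition n E F" and "j < length F"
  shows "F ! j \<noteq> {}" and "F ! j \<subseteq> {0..<n}"
  using assms nth_mem[OF assms(2)] unfolding clique_partition_def is_clique_def by auto

lemma card_Int_clique_partition_le_1:
  assumes cp: "clique_partition n E F" and "i < length F" and "j < length F" and "i \<noteq> j"
  shows "card (F ! i \<inter> F ! j) \<le> 1"
proof -
  have "u = v" if "u \<in> F ! i \<inter> F ! j" and "v \<in> F ! i \<inter> F ! j" for u v
  proof (rule ccontr)
    assume "u \<noteq> v"
    then have "{u, v} \<in> E"
      using cp nth_mem[OF \<open>i < length F\<close>] that unfolding clique_partition_def is_clique_def by blast
    then have "\<exists>!l. l < length F \<and> {u, v} \<subseteq> F ! l"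
      using cp unfolding clique_partition_def by blast
    then show False
      using that assms(2-4) by blast
  qed
  moreover have "finite (F ! i \<inter> F ! j)"
    using clique_partition_nth(2)[OF cp \<open>i < length F\<close>] by (simp add: finite_subset)
  ultimately show ?thesis
    using card_le_Suc0_iff_eq by (metis One_nat_def)
qed

lemma incidence_mat_gram:
  assumes cp: "clique_partition n E F" and cu: "clique_uniform s F"
  shows "(incidence_mat n F)\<^sup>T * incidence_mat n F
     = real s \<cdot>\<^sub>m 1\<^sub>m (length F) + clique_partition_graph_adj F"
proof (rule eq_matI)
  fix i j assume "i < dim_row (real s \<cdot>\<^sub>m 1\<^sub>m (length F) + clique_partition_graph_adj F)"
    and "j < dim_col (real s \<cdot>\<^sub>m 1\<^sub>m (length F) + clique_partition_graph_adj F)"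
  then have i: "i < length F" and j: "j < length F" by (auto simp: clique_partition_graph_adj_def)
  have "((incidence_mat n F)\<^sup>T * incidence_mat n F) $$ (i, j)
      = (\<Sum>l\<in>{0..<n}. if l \<in> F ! i \<inter> F ! j then 1 else 0)"
    using i j by (auto simp: incidence_mat_def scalar_prod_def intro!: sum.cong)
  also have "\<dots> = real (card {l \<in> {0..<n}. l \<in> F ! i \<inter> F ! j})"
    by (simp add: sum.inter_filter[symmetric])
  also have "\<dots> = real (card (F ! i \<inter> F ! j))"
    using clique_partition_nth(2)[OF cp i] by (intro arg_cong[where f = "\<lambda>S. real (card S)"]) auto
  also have "\<dots> = (real s \<cdot>\<^sub>m 1\<^sub>m (length F) + clique_partition_graph_adj F) $$ (i, j)"
  proof (cases "i = j")
    case True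
    then show ?thesis using cu i by (simp add: clique_uniform_def clique_partition_graph_adj_def)
  next
    case False
    have "finite (F ! i \<inter> F ! j)"
      using clique_partition_nth(2)[OF cp i] by (meson finite_atLeastLessThan finite_subset inf.coboundedI1)
    then show ?thesis
      using False i j card_Int_clique_partition_le_1[OF cp i j False]
      by (auto simp: clique_partition_graph_adj_def le_Suc_eq)
  qed
  finally show "((incidence_mat n F)\<^sup>T * incidence_mat n F) $$ (i, j)
      = (real s \<cdot>\<^sub>m 1\<^sub>m (length F) + clique_partition_graph_adj F) $$ (i, j)" .
qed (auto simp: incidence_mat_def clique_partition_graph_adj_def)

lemma avg_clique_degree_mat_trace:
  "avg_clique_degree n F = mat_trace (Q_mat n F) / n"
proof -
  have "Q_mat n F $$ (i, i) = real (clique_degree F i)" if "i < n" for i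
  proof -
    have "Q_mat n F $$ (i, i) = (\<Sum>j\<in>{0..<length F}. if i \<in> F ! j then 1 else 0)"
      using that by (auto simp: Q_mat_def incidence_mat_def scalar_prod_def intro!: sum.cong)
    also have "\<dots> = real (card {j \<in> {0..<length F}. i \<in> F ! j})"
      by (simp add: sum.inter_filter[symmetric])
    finally show ?thesis
      by (simp add: clique_degree_def)
  qed
  then show ?thesis
    by (simp add: avg_clique_degree_def mat_trace_def Q_mat_def incidence_mat_def)
qed

lemma sum_mset_shift_identity:
  fixes P Q :: "real multiset" and f :: "real \<Rightarrow> 'a::semiring_1"
  assumes "replicate_mset k 0 + Q = replicate_mset n 0 + image_mset (\<lambda>a. a + s) P"
  shows "of_nat k * f 0 + (\<Sum>q\<in>#Q. f q) = of_nat n * f 0 + (\<Sum>a\<in>#P. f (a + s))"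
  using arg_cong[OF assms, of "\<lambda>X. \<Sum>x\<in>#X. f x"] by (simp add: image_mset.compositionality o_def)

lemma sum_mset_shifted:
  fixes P Q :: "real multiset"
  assumes "replicate_mset k 0 + Q = replicate_mset n 0 + image_mset (\<lambda>a. a + s) P"
    and "sum_mset P = 0" and "size P = k"
  shows "sum_mset Q = real k * s"
  using sum_mset_shift_identity[OF assms(1), of id] assms(2,3) by (simp add: sum_mset.distrib)

lemma energy_shift_le:
  fixes P Q :: "real multiset"
  assumes shift: "replicate_mset k 0 + Q = replicate_mset n 0 + image_mset (\<lambda>a. a + s) P"
    and "sum_mset P = 0" and "size P = k" and "0 < k" and "k < n" and "0 \<le> s"
  shows "(\<Sum>a\<in>#P. \<bar>a\<bar>) \<le> (\<Sum>q\<in>#Q. \<bar>q - sum_mset Q / n\<bar>) + 2 * real k * s / real n - 2 * s"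
proof -
  define t where "t = sum_mset Q / n"
  have sum_Q: "sum_mset Q = real k * s" by (rule sum_mset_shifted[OF shift assms(2,3)])
  then have nt: "real n * t = real k * s" using \<open>k < n\<close> unfolding t_def by simp
  then have "real n * t \<le> real n * s"
    using \<open>k < n\<close> \<open>0 \<le> s\<close> by (simp add: mult_right_mono)
  then have "t - s \<le> 0" using \<open>k < n\<close> by simp
  have "0 \<le> t" unfolding t_def sum_Q using \<open>0 \<le> s\<close> by simp
  have "P \<noteq> {#}" using assms(3,4) by auto
  then obtain x where "x \<in># P" and "sum_mset P \<le> real (size P) * x"
    by (rule ex_mem_ge_mean)
  then have "0 \<le> x" using assms(2-4) by (simp add: zero_le_mult_iff)
  have "(\<Sum>a\<in>#P. \<bar>a\<bar>) \<le> (\<Sum>a\<in>#P. \<bar>a - (t - s)\<bar>) + (real k - 2) * (s - t)"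
    using sum_mset_abs_diff_le[OF \<open>x \<in># P\<close> \<open>t - s \<le> 0\<close> \<open>0 \<le> x\<close>] assms(3) by simp
  moreover have "real k * t + (\<Sum>q\<in>#Q. \<bar>q - t\<bar>) = real n * t + (\<Sum>a\<in>#P. \<bar>a - (t - s)\<bar>)"
    using sum_mset_shift_identity[OF shift, of "\<lambda>x. \<bar>x - t\<bar>"] \<open>0 \<le> t\<close>
    by (simp add: algebra_simps)
  moreover have "2 * real k * s / real n = 2 * t"
    using nt \<open>k < n\<close> by (simp add: field_simps)
  moreover have "(real k - 2) * (s - t) = real k * s - real k * t - 2 * s + 2 * t"
    by (simp add: algebra_simps)
  ultimately show ?thesis
    using nt unfolding t_def[symmetric] by linarith
qed

lemma energy_shift_ge:
  fixes P Q :: "real multiset"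
  assumes shift: "replicate_mset k 0 + Q = replicate_mset n 0 + image_mset (\<lambda>a. a + s) P"
    and "sum_mset P = 0" and "size P = k" and "0 < n" and "n < k" and "0 \<le> s"
  shows "(\<Sum>q\<in>#Q. \<bar>q - sum_mset Q / n\<bar>) + 2 * real k * s / real n - 2 * s \<le> (\<Sum>a\<in>#P. \<bar>a\<bar>)"
proof -
  define t where "t = sum_mset Q / n"
  have sum_Q: "sum_mset Q = real k * s" by (rule sum_mset_shifted[OF shift assms(2,3)])
  then have nt: "real n * t = real k * s" using \<open>0 < n\<close> unfolding t_def by simp
  then have "real n * s \<le> real n * t"
    using \<open>n < k\<close> \<open>0 \<le> s\<close> by (simp add: mult_right_mono)
  then have "s \<le> t" using \<open>0 < n\<close> by simp
  have "size Q = n" using arg_cong[OF shift, of size] assms(3) by simp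
  then have "Q \<noteq> {#}" using \<open>0 < n\<close> by auto
  then obtain x where "x \<in># Q" and "sum_mset Q \<le> real (size Q) * x"
    by (rule ex_mem_ge_mean)
  then have "t \<le> x" using \<open>size Q = n\<close> \<open>0 < n\<close> unfolding t_def by (simp add: field_simps)
  have "(\<Sum>q\<in>#Q. \<bar>q - t\<bar>) \<le> (\<Sum>q\<in>#Q. \<bar>q - s\<bar>) + (real n - 2) * (t - s)"
    using sum_mset_abs_diff_le[OF \<open>x \<in># Q\<close> \<open>s \<le> t\<close> \<open>t \<le> x\<close>] \<open>size Q = n\<close> by simp
  moreover have "real k * s + (\<Sum>q\<in>#Q. \<bar>q - s\<bar>) = real n * s + (\<Sum>a\<in>#P. \<bar>a\<bar>)"
    using sum_mset_shift_identity[OF shift, of "\<lambda>x. \<bar>x - s\<bar>"] \<open>0 \<le> s\<close> by simp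
  moreover have "2 * real k * s / real n = 2 * t"
    using nt \<open>0 < n\<close> by (simp add: field_simps)
  moreover have "(real n - 2) * (t - s) = real n * t - real n * s - 2 * t + 2 * s"
    by (simp add: algebra_simps)
  ultimately show ?thesis
    using nt unfolding t_def[symmetric] by linarith
qed

lemma energy_shift_eq:
  fixes P Q :: "real multiset"
  assumes shift: "replicate_mset n 0 + Q = replicate_mset n 0 + image_mset (\<lambda>a. a + s) P"
    and "sum_mset P = 0" and "size P = n" and "0 < n"
  shows "(\<Sum>a\<in>#P. \<bar>a\<bar>) = (\<Sum>q\<in>#Q. \<bar>q - sum_mset Q / n\<bar>)"
proof -
  have "sum_mset Q / n = s"
    using sum_mset_shifted[OF shift assms(2,3)] \<open>0 < n\<close> by simp
  then show ?thesis
    using sum_mset_shift_identity[OF shift, of "\<lambda>x. \<bar>x - s\<bar>"] by simp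
qed

theorem mainTheorem11:
  fixes n k s :: nat and E :: "nat set set" and F :: "nat set list"
  assumes "simple_graph n E"
    and "clique_partition n E F"
    and "clique_uniform s F"
    and "length F = k"
    and "k \<ge> 1"
  shows "(k < n \<longrightarrow> graph_energy (clique_partition_graph_adj F)
            \<le> Q_energy n F + 2 * real k * real s / real n - 2 * real s)
       \<and> (k > n \<longrightarrow> graph_energy (clique_partition_graph_adj F)
            \<ge> Q_energy n F + 2 * real k * real s / real n - 2 * real s)
       \<and> (k = n \<longrightarrow> graph_energy (clique_partition_graph_adj F) = Q_energy n F)"
proof -
  let ?M = "incidence_mat n F" and ?A = "clique_partition_graph_adj F" and ?Q = "Q_mat n F"
  define P where "P = real_eigenvalues ?A"
  define R where "R = real_eigenvalues ?Q"
  have "0 < k" using assms(5) by simp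
  then have "0 < n" using clique_partition_nth[OF assms(2), of 0] assms(4) by fastforce
  have M: "?M \<in> carrier_mat n k" and A: "?A \<in> carrier_mat k k" and Q: "?Q \<in> carrier_mat n n"
    using assms(4) by (auto simp: incidence_mat_def clique_partition_graph_adj_def Q_mat_def)
  have "?A\<^sup>T = ?A" and "?Q\<^sup>T = ?Q"
    using M by (auto simp: clique_partition_graph_adj_def Int_commute Q_mat_def transpose_mult)
  then have energy_A: "graph_energy ?A = (\<Sum>a\<in>#P. \<bar>a\<bar>)"
    and energy_Q: "Q_energy n F = (\<Sum>q\<in>#R. \<bar>q - sum_mset R / n\<bar>)"
    unfolding graph_energy_def Q_energy_def P_def R_def avg_clique_degree_mat_trace
    by (simp_all add: shifted_energy_real_eigenvalues[OF A] shifted_energy_real_eigenvalues[OF Q]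
        sum_real_eigenvalues[OF Q])
  have shift: "replicate_mset k 0 + R = replicate_mset n 0 + image_mset (\<lambda>a. a + real s) P"
    using real_eigenvalues_mult_comm[of ?M n k "?M\<^sup>T"] M incidence_mat_gram[OF assms(2,3)]
      real_eigenvalues_add_scalar[OF A] assms(4)
    unfolding P_def R_def Q_mat_def by simp
  have "sum_mset P = 0"
    using sum_real_eigenvalues[OF A] by (simp add: P_def mat_trace_def clique_partition_graph_adj_def)
  moreover have "size P = k"
    using size_real_eigenvalues[OF A] by (simp add: P_def)
  ultimately show ?thesis
    using energy_shift_le[OF shift _ _ \<open>0 < k\<close>] energy_shift_ge[OF shift _ _ \<open>0 < n\<close>]
      energy_shift_eq[of n R "real s" P] shift \<open>0 < n\<close>
    unfolding energy_A energy_Q by auto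
qed

end
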